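(* Let $T$ be a tree with positive edge weights rooted at the homebase $r$, let $q\ge 0$, and let $v$ be an internal vertex of $T$, i.e., a vertex different from $r$ with exactly one child. In a cost-optimal strategy exploring $T$, an agent occupying $v$ never returns, in its next move, to the vertex it occupied just before $v$.
   Context: Exploration model: given a connected graph with positive edge weights, a homebase vertex, and invoking cost $q\ge 0$, a strategy is a sequence of moves, each either invoking a new agent (appearing at the homebase) or an agent traversing an edge incident to its current vertex. A vertex is explored when first visited; the strategy explores the graph when every vertex has been visited by some agent (agents need not return). With $k$ agents, agent $i$ traversing total distance $d_i$ (weights counted with multiplicity), the cost is $kq+\sum_i d_i$; a strategy is cost-optimal if it explores the graph with minimum cost (off-line setting). *)

theory Defs
  imports Main Complex_Main
begin

definition is_walk :: "'a set set \<Rightarrow> 'a list \<Rightarrow> bool" where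
  "is_walk E xs \<longleftrightarrow> xs \<noteq> [] \<and> (\<forall>i. Suc i < length xs \<longrightarrow> {xs ! i, xs ! Suc i} \<in> E)"

definition is_path :: "'a set set \<Rightarrow> 'a list \<Rightarrow> bool" where
  "is_path E xs \<longleftrightarrow> is_walk E xs \<and> distinct xs"

definition is_cycle :: "'a set set \<Rightarrow> 'a list \<Rightarrow> bool" where
  "is_cycle E xs \<longleftrightarrow> length xs \<ge> 3 \<and> is_path E xs \<and> {last xs, hd xs} \<in> E"

definition simple_graph :: "'a set \<Rightarrow> 'a set set \<Rightarrow> bool" where
  "simple_graph V E \<longleftrightarrow> finite V \<and> (\<forall>e\<in>E. \<exists>x y. x \<noteq> y \<and> x \<in> V \<and> y \<in> V \<and> e = {x, y})"

definition connected_graph :: "'a set \<Rightarrow> 'a set set \<Rightarrow> bool" where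
  "connected_graph V E \<longleftrightarrow>
     (\<forall>x\<in>V. \<forall>y\<in>V. \<exists>xs. is_walk E xs \<and> hd xs = x \<and> last xs = y \<and> set xs \<subseteq> V)"

definition is_tree :: "'a set \<Rightarrow> 'a set set \<Rightarrow> bool" where
  "is_tree V E \<longleftrightarrow> simple_graph V E \<and> V \<noteq> {} \<and> connected_graph V E \<and> \<not> (\<exists>xs. is_cycle E xs)"

definition is_child :: "'a set set \<Rightarrow> 'a \<Rightarrow> 'a \<Rightarrow> 'a \<Rightarrow> bool" where
  "is_child E r v c \<longleftrightarrow> {v, c} \<in> E \<and> (\<exists>ps. is_path E (ps @ [v, c]) \<and> hd (ps @ [v, c]) = r)"

definition internal_vertex :: "'a set \<Rightarrow> 'a set set \<Rightarrow> 'a \<Rightarrow> 'a \<Rightarrow> bool" where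
  "internal_vertex V E r v \<longleftrightarrow> v \<in> V \<and> v \<noteq> r \<and> card {c. is_child E r v c} = 1"

text \<open>A move either invokes a new agent (appearing at the homebase) or lets agent i
  (agents numbered 0,1,... in order of invocation) traverse an edge to vertex u.\<close>
datatype 'a move = Invoke | Traverse nat 'a

definition step :: "'a \<Rightarrow> 'a list \<Rightarrow> 'a move \<Rightarrow> 'a list" where
  "step r pos m = (case m of Invoke \<Rightarrow> pos @ [r] | Traverse i u \<Rightarrow> pos[i := u])"

definition pos_after :: "'a \<Rightarrow> 'a move list \<Rightarrow> nat \<Rightarrow> 'a list" where
  "pos_after r S k = foldl (step r) [] (take k S)"

definition valid_strategy :: "'a set set \<Rightarrow> 'a \<Rightarrow> 'a move list \<Rightarrow> bool" where
  "valid_strategy E r S \<longleftrightarrow> (\<forall>k<length S. case S ! k of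
       Invoke \<Rightarrow> True
     | Traverse i u \<Rightarrow> i < length (pos_after r S k) \<and> {pos_after r S k ! i, u} \<in> E)"

definition explores :: "'a set \<Rightarrow> 'a \<Rightarrow> 'a move list \<Rightarrow> bool" where
  "explores V r S \<longleftrightarrow> V \<subseteq> (\<Union>k\<in>{0..length S}. set (pos_after r S k))"

definition num_agents :: "'a move list \<Rightarrow> nat" where
  "num_agents S = length (filter (\<lambda>m. m = Invoke) S)"

definition move_cost :: "('a set \<Rightarrow> real) \<Rightarrow> 'a \<Rightarrow> 'a move list \<Rightarrow> nat \<Rightarrow> real" where
  "move_cost w r S k = (case S ! k of Invoke \<Rightarrow> 0 | Traverse i u \<Rightarrow> w {pos_after r S k ! i, u})"

definition strategy_cost :: "real \<Rightarrow> ('a set \<Rightarrow> real) \<Rightarrow> 'a \<Rightarrow> 'a move list \<Rightarrow> real" where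
  "strategy_cost q w r S = q * real (num_agents S) + (\<Sum>k<length S. move_cost w r S k)"

definition cost_optimal ::
  "'a set \<Rightarrow> 'a set set \<Rightarrow> ('a set \<Rightarrow> real) \<Rightarrow> 'a \<Rightarrow> real \<Rightarrow> 'a move list \<Rightarrow> bool" where
  "cost_optimal V E w r q S \<longleftrightarrow> valid_strategy E r S \<and> explores V r S \<and>
     (\<forall>S'. valid_strategy E r S' \<and> explores V r S' \<longrightarrow> strategy_cost q w r S \<le> strategy_cost q w r S')"

end

theory Submission
  imports Defs
begin

text \<open>
  Suppose agent \<open>i\<close> moves from \<open>p\<close> to \<open>v\<close> and its next move
  takes it back to \<open>p\<close>. Deleting these two moves leaves the other agents' positions
  untouched, so it yields a valid strategy that is cheaper by \<open>2 w {p, v} > 0\<close> and still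
  visits every vertex the original visited, except possibly \<open>v\<close>. Being internal, \<open>v\<close>
  has a child \<open>c\<close>, which is still visited. In a tree every walk from the root to \<open>c\<close>
  passes through \<open>v\<close>, so \<open>v\<close> is visited as well and the shorter strategy still
  explores the tree, contradicting optimality.
\<close>

section \<open>Walks in trees\<close>

definition adjacent :: "'a set set \<Rightarrow> 'a \<Rightarrow> 'a \<Rightarrow> bool" where
  "adjacent E x y \<longleftrightarrow> {x, y} \<in> E"

lemma adjacent_sym: "adjacent E y x = adjacent E x y"
  by (simp add: adjacent_def insert_commute)

lemma is_walk_iff_successively: "is_walk E xs \<longleftrightarrow> xs \<noteq> [] \<and> successively (adjacent E) xs"
  by (simp add: is_walk_def successively_conv_nth adjacent_def)

lemma is_walk_append:
  "is_walk E (xs @ ys) \<longleftrightarrow>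
     (xs = [] \<longrightarrow> is_walk E ys) \<and> (ys = [] \<longrightarrow> is_walk E xs) \<and>
     (xs \<noteq> [] \<and> ys \<noteq> [] \<longrightarrow> is_walk E xs \<and> is_walk E ys \<and> {last xs, hd ys} \<in> E)"
  by (auto simp: is_walk_iff_successively successively_append_iff adjacent_def)

lemma is_walk_rev [simp]: "is_walk E (rev xs) \<longleftrightarrow> is_walk E xs"
  by (simp add: is_walk_iff_successively adjacent_sym)

lemma is_walk_Cons: "is_walk E (x # xs) \<longleftrightarrow> xs = [] \<or> {x, hd xs} \<in> E \<and> is_walk E xs"
  by (auto simp: is_walk_iff_successively successively_Cons adjacent_def)

lemma is_walk_take: "is_walk E xs \<Longrightarrow> 0 < n \<Longrightarrow> is_walk E (take n xs)"
  using successively_append_iff[of "adjacent E" "take n xs" "drop n xs"]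
  by (auto simp: is_walk_iff_successively)

lemma is_walk_drop: "is_walk E xs \<Longrightarrow> n < length xs \<Longrightarrow> is_walk E (drop n xs)"
  using successively_append_iff[of "adjacent E" "take n xs" "drop n xs"]
  by (auto simp: is_walk_iff_successively)

lemma is_walk_shortcut: "is_walk E (xs @ y # ys @ y # zs) \<Longrightarrow> is_walk E (xs @ y # zs)"
  by (auto simp: is_walk_iff_successively successively_append_iff successively_Cons)

lemma shortest_walk_to_set:
  assumes "is_walk E xs" "last xs \<in> T"
  obtains ys y where "is_path E (ys @ [y])" "hd (ys @ [y]) = hd xs" "set (ys @ [y]) \<subseteq> set xs"
    "y \<in> T" "set ys \<inter> T = {}"
proof -
  define P where "P zs \<longleftrightarrow> is_walk E zs \<and> hd zs = hd xs \<and> last zs \<in> T \<and> set zs \<subseteq> set xs" for zs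
  obtain zs where P: "P zs" and shortest: "\<And>zs'. P zs' \<Longrightarrow> length zs \<le> length zs'"
    using ex_has_least_nat[of P xs length] assms by (auto simp: P_def)
  have "zs \<noteq> []"
    using P by (auto simp: P_def is_walk_def)
  then obtain ys y where zs: "zs = ys @ [y]"
    by (metis append_butlast_last_id)
  have "distinct zs"
  proof (rule ccontr)
    assume "\<not> distinct zs"
    then obtain a b d x where "zs = a @ [x] @ b @ [x] @ d"
      using not_distinct_decomp by blast
    moreover from this have "P (a @ [x] @ d)"
      using P is_walk_shortcut[of E a x b d] by (auto simp: P_def hd_append split: if_splits)
    ultimately show False
      using shortest by fastforce
  qed
  moreover have "set ys \<inter> T = {}"
  proof (rule ccontr)
    assume "set ys \<inter> T \<noteq> {}"
    then obtain k where k: "k < length ys" "ys ! k \<in> T"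
      by (auto simp: in_set_conv_nth)
    have "last (take (Suc k) zs) = ys ! k"
      using k zs by (simp add: take_Suc_conv_app_nth nth_append)
    then have "P (take (Suc k) zs)"
      using P k by (auto simp: P_def is_walk_take hd_take dest: in_set_takeD)
    then show False
      using shortest[of "take (Suc k) zs"] k zs by simp
  qed
  ultimately show thesis
    using that[of ys y] P zs by (auto simp: P_def is_path_def)
qed

lemma walk_to_child_contains_parent:
  assumes acyclic: "\<not> (\<exists>cs. is_cycle E cs)" and child: "is_child E r v c"
    and walk: "is_walk E xs" "hd xs = r" "last xs = c"
  shows "v \<in> set xs"
proof (rule ccontr)
  assume v_notin: "v \<notin> set xs"
  obtain ps where path: "is_path E (ps @ [v, c])" and from_r: "hd (ps @ [v, c]) = r"
    using child by (auto simp: is_child_def)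
  have "ps \<noteq> []"
    using from_r walk v_notin by (auto simp: is_walk_def)
  then have "r \<in> set ps"
    using from_r by (auto simp: hd_append)
  moreover have "last (rev xs) = r" "hd (rev xs) = c"
    using walk by (auto simp: is_walk_def hd_rev last_rev)
  ultimately obtain ys y where ys: "is_path E (ys @ [y])" "hd (ys @ [y]) = c"
      "set (ys @ [y]) \<subseteq> set xs" "y \<in> set ps" "set ys \<inter> set ps = {}"
    using shortest_walk_to_set[of E "rev xs" "set ps"] walk by auto
  have "c \<notin> set ps"
    using path by (auto simp: is_path_def)
  then have "ys \<noteq> []"
    using ys by auto
  then have ys_walk: "is_walk E ys" "hd ys = c" "{last ys, y} \<in> E" "distinct ys"
    using ys by (auto simp: is_path_def is_walk_append)
  \<comment> \<open>Closed up by the path from \<open>y\<close> to \<open>v\<close> and the edge \<open>{v, c}\<close>, the walk \<open>ys\<close> becomes a cycle.\<close>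
  obtain k where k: "k < length ps" "ps ! k = y"
    using ys(4) by (auto simp: in_set_conv_nth)
  define D where "D = drop k (ps @ [v])"
  have D: "is_walk E D" "hd D = y" "last D = v" "distinct D" "2 \<le> length D"
    using path k is_walk_drop[of E "ps @ [v]" k] is_walk_take[of E "ps @ [v, c]" "Suc (length ps)"]
    by (auto simp: D_def is_path_def hd_drop_conv_nth nth_append dest: in_set_dropD)
  have "set D \<subseteq> insert v (set ps)"
    using set_drop_subset[of k "ps @ [v]"] by (auto simp: D_def)
  then have "set ys \<inter> set D = {}"
    using ys v_notin by auto
  moreover have "{v, c} \<in> E"
    using child by (simp add: is_child_def)
  moreover have "hd (ys @ D) = c" "last (ys @ D) = v" "3 \<le> length (ys @ D)"
    using ys_walk D \<open>ys \<noteq> []\<close> by (auto simp flip: length_greater_0_conv)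
  ultimately have "is_cycle E (ys @ D)"
    using ys_walk D \<open>ys \<noteq> []\<close>
    by (auto simp: is_cycle_def is_path_def is_walk_append insert_commute)
  then show False
    using acyclic by blast
qed

section \<open>Strategies as runs from a configuration\<close>

definition move_ok :: "'a set set \<Rightarrow> 'a list \<Rightarrow> 'a move \<Rightarrow> bool" where
  "move_ok E pos m = (case m of Invoke \<Rightarrow> True | Traverse i u \<Rightarrow> i < length pos \<and> {pos ! i, u} \<in> E)"

definition move_weight :: "('a set \<Rightarrow> real) \<Rightarrow> 'a list \<Rightarrow> 'a move \<Rightarrow> real" where
  "move_weight w pos m = (case m of Invoke \<Rightarrow> 0 | Traverse i u \<Rightarrow> w {pos ! i, u})"

fun run_valid :: "'a set set \<Rightarrow> 'a \<Rightarrow> 'a list \<Rightarrow> 'a move list \<Rightarrow> bool" where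
  "run_valid E r pos [] = True"
| "run_valid E r pos (m # ms) = (move_ok E pos m \<and> run_valid E r (step r pos m) ms)"

fun run_visited :: "'a \<Rightarrow> 'a list \<Rightarrow> 'a move list \<Rightarrow> 'a set" where
  "run_visited r pos [] = set pos"
| "run_visited r pos (m # ms) = set pos \<union> run_visited r (step r pos m) ms"

fun run_cost :: "('a set \<Rightarrow> real) \<Rightarrow> 'a \<Rightarrow> 'a list \<Rightarrow> 'a move list \<Rightarrow> real" where
  "run_cost w r pos [] = 0"
| "run_cost w r pos (m # ms) = move_weight w pos m + run_cost w r (step r pos m) ms"

lemma run_valid_conv_nth:
  "run_valid E r pos ms \<longleftrightarrow> (\<forall>k<length ms. move_ok E (foldl (step r) pos (take k ms)) (ms ! k))"
  by (induction ms arbitrary: pos) (auto simp: less_Suc_eq_0_disj)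

lemma run_visited_conv_UN:
  "run_visited r pos ms = (\<Union>k\<in>{0..length ms}. set (foldl (step r) pos (take k ms)))"
proof (induction ms arbitrary: pos)
  case (Cons m ms)
  have "{0..length (m # ms)} = insert 0 (Suc ` {0..length ms})"
    by (auto simp: image_iff)
  then show ?case
    using Cons.IH by (simp del: image_Suc_atLeastAtMost)
qed simp

lemma run_cost_conv_sum:
  "run_cost w r pos ms = (\<Sum>k<length ms. move_weight w (foldl (step r) pos (take k ms)) (ms ! k))"
  by (induction ms arbitrary: pos) (simp_all add: sum.lessThan_Suc_shift del: sum.lessThan_Suc)

lemma valid_strategy_iff_run_valid: "valid_strategy E r S \<longleftrightarrow> run_valid E r [] S"
  unfolding valid_strategy_def run_valid_conv_nth move_ok_def pos_after_def by simp

lemma explores_iff_run_visited: "explores V r S \<longleftrightarrow> V \<subseteq> run_visited r [] S"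
  by (simp add: explores_def run_visited_conv_UN pos_after_def)

lemma strategy_cost_eq_run_cost:
  "strategy_cost q w r S = q * real (num_agents S) + run_cost w r [] S"
  unfolding strategy_cost_def run_cost_conv_sum move_cost_def move_weight_def pos_after_def by simp

lemma run_valid_append:
  "run_valid E r pos (ms @ ms') \<longleftrightarrow> run_valid E r pos ms \<and> run_valid E r (foldl (step r) pos ms) ms'"
  by (induction ms arbitrary: pos) auto

lemma run_cost_append:
  "run_cost w r pos (ms @ ms') = run_cost w r pos ms + run_cost w r (foldl (step r) pos ms) ms'"
  by (induction ms arbitrary: pos) auto

lemma set_subset_run_visited: "set pos \<subseteq> run_visited r pos ms"
  by (cases ms) auto

lemma set_foldl_step_subset_run_visited: "set (foldl (step r) pos ms) \<subseteq> run_visited r pos ms"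
  by (induction ms arbitrary: pos) auto

lemma run_visited_append:
  "run_visited r pos (ms @ ms') = run_visited r pos ms \<union> run_visited r (foldl (step r) pos ms) ms'"
  by (induction ms arbitrary: pos) (auto dest: set_subset_run_visited[THEN subsetD])

lemma run_visited_reachable:
  assumes "run_valid E r pos ms" "y \<in> run_visited r pos ms"
  obtains xs where "is_walk E xs" "hd xs \<in> insert r (set pos)" "last xs = y"
    "set xs \<subseteq> run_visited r pos ms"
  using assms
proof (induction ms arbitrary: pos thesis)
  case Nil
  then show ?case
    by (auto simp: is_walk_def intro: Nil.prems(1)[of "[y]"])
next
  case (Cons m ms)
  show ?case
  proof (cases "y \<in> set pos")
    case True
    then show ?thesis
      by (auto simp: is_walk_def intro: Cons.prems(1)[of "[y]"])
  next
    case False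
    then obtain xs where xs: "is_walk E xs" "hd xs \<in> insert r (set (step r pos m))" "last xs = y"
        "set xs \<subseteq> run_visited r (step r pos m) ms"
      using Cons.IH[of "step r pos m"] Cons.prems(2,3) by auto
    then have visited: "set xs \<subseteq> run_visited r pos (m # ms)"
      by auto
    show ?thesis
    proof (cases m)
      case Invoke
      then show ?thesis
        using xs visited Cons.prems(1) by (auto simp: step_def)
    next
      case (Traverse i u)
      then have i: "i < length pos" "{pos ! i, u} \<in> E"
        using Cons.prems(2) by (auto simp: move_ok_def)
      then consider "hd xs \<in> insert r (set pos)" | "hd xs = u"
        using xs(2) set_update_subset_insert[of pos i u] by (auto simp: Traverse step_def)
      then show ?thesis
      proof cases
        case 1
        then show ?thesis
          using xs visited Cons.prems(1) by blast
      next
        case 2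
        have "xs \<noteq> []"
          using xs(1) by (simp add: is_walk_def)
        with 2 xs i visited show ?thesis
          by (intro Cons.prems(1)[of "pos ! i # xs"]) (auto simp: is_walk_Cons)
      qed
    qed
  qed
qed

section \<open>Removing a round trip\<close>

definition agent_idle :: "nat \<Rightarrow> 'a move list \<Rightarrow> bool" where
  "agent_idle i ms \<longleftrightarrow> (\<forall>m\<in>set ms. \<forall>u. m \<noteq> Traverse i u)"

lemma agent_idle_simps [simp]:
  "agent_idle i []"
  "agent_idle i (m # ms) \<longleftrightarrow> (\<forall>u. m \<noteq> Traverse i u) \<and> agent_idle i ms"
  by (auto simp: agent_idle_def)

lemma less_length_step [simp]: "i < length pos \<Longrightarrow> i < length (step r pos m)"
  by (cases m) (auto simp: step_def)

lemma step_update_idle: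
  "i < length pos \<Longrightarrow> \<forall>u. m \<noteq> Traverse i u \<Longrightarrow> step r (pos[i := a]) m = (step r pos m)[i := a]"
  by (cases m) (auto simp: step_def list_update_append1 list_update_swap)

lemma foldl_step_update_idle:
  "i < length pos \<Longrightarrow> agent_idle i ms \<Longrightarrow>
     foldl (step r) (pos[i := a]) ms = (foldl (step r) pos ms)[i := a]"
  by (induction ms arbitrary: pos) (simp_all add: step_update_idle)

lemma foldl_step_idle_nth:
  "i < length pos \<Longrightarrow> agent_idle i ms \<Longrightarrow>
     i < length (foldl (step r) pos ms) \<and> foldl (step r) pos ms ! i = pos ! i"
proof (induction ms arbitrary: pos)
  case (Cons m ms)
  have "step r pos m ! i = pos ! i"
    using Cons.prems by (cases m) (auto simp: step_def nth_append)
  then show ?case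
    using Cons by simp
qed simp

lemma run_valid_update_idle:
  "i < length pos \<Longrightarrow> agent_idle i ms \<Longrightarrow> run_valid E r (pos[i := a]) ms = run_valid E r pos ms"
proof (induction ms arbitrary: pos)
  case (Cons m ms)
  have "move_ok E (pos[i := a]) m = move_ok E pos m"
    using Cons.prems by (cases m) (auto simp: move_ok_def)
  then show ?case
    using Cons by (simp add: step_update_idle)
qed simp

lemma run_cost_update_idle:
  "i < length pos \<Longrightarrow> agent_idle i ms \<Longrightarrow> run_cost w r (pos[i := a]) ms = run_cost w r pos ms"
proof (induction ms arbitrary: pos)
  case (Cons m ms)
  have "move_weight w (pos[i := a]) m = move_weight w pos m"
    using Cons.prems by (cases m) (auto simp: move_weight_def)
  then show ?case
    using Cons by (simp add: step_update_idle)
qed simp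

lemma run_visited_update_idle:
  "i < length pos \<Longrightarrow> agent_idle i ms \<Longrightarrow>
     run_visited r (pos[i := a]) ms \<subseteq> insert a (run_visited r pos ms)"
proof (induction ms arbitrary: pos)
  case Nil
  then show ?case
    using set_update_subset_insert by simp
next
  case (Cons m ms)
  show ?case
    using Cons.IH[of "step r pos m"] Cons.prems set_update_subset_insert[of pos i a]
    by (auto simp: step_update_idle)
qed

lemma round_trip_removal:
  assumes valid: "run_valid E r pos (Traverse i v # ms @ Traverse i (pos ! i) # ms')"
    and idle: "agent_idle i ms"
  shows "run_valid E r pos (ms @ ms')"
    and "run_cost w r pos (Traverse i v # ms @ Traverse i (pos ! i) # ms') =
           run_cost w r pos (ms @ ms') + 2 * w {pos ! i, v}"
    and "run_visited r pos (Traverse i v # ms @ Traverse i (pos ! i) # ms') \<subseteq>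
           insert v (run_visited r pos (ms @ ms'))"
proof -
  define Q where "Q = foldl (step r) pos ms"
  have i: "i < length pos"
    using valid by (simp add: move_ok_def)
  have away: "step r pos (Traverse i v) = pos[i := v]"
    by (simp add: step_def)
  have during: "foldl (step r) (pos[i := v]) ms = Q[i := v]"
    using foldl_step_update_idle[OF i idle] by (simp add: Q_def)
  have "i < length Q" "Q ! i = pos ! i"
    using foldl_step_idle_nth[OF i idle] by (simp_all add: Q_def)
  then have return: "step r (Q[i := v]) (Traverse i (pos ! i)) = Q"
    by (metis list_update_id list_update_overwrite step_def move.case(2))
  show "run_valid E r pos (ms @ ms')"
    using valid away during return run_valid_update_idle[OF i idle]
    by (simp add: run_valid_append Q_def)
  show "run_cost w r pos (Traverse i v # ms @ Traverse i (pos ! i) # ms') =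
      run_cost w r pos (ms @ ms') + 2 * w {pos ! i, v}"
    using away during return run_cost_update_idle[OF i idle] \<open>i < length Q\<close>
    by (simp add: run_cost_append move_weight_def Q_def insert_commute)
  have "set (Q[i := v]) \<subseteq> run_visited r (pos[i := v]) ms"
    using set_foldl_step_subset_run_visited[of r "pos[i := v]" ms] during by simp
  then show "run_visited r pos (Traverse i v # ms @ Traverse i (pos ! i) # ms') \<subseteq>
      insert v (run_visited r pos (ms @ ms'))"
    using away during return run_visited_update_idle[OF i idle, of r v]
      set_subset_run_visited[of pos r ms]
    by (auto simp: run_visited_append Q_def)
qed

lemma strategy_round_trip_removal:
  assumes valid: "valid_strategy E r (A @ Traverse i v # B @ Traverse i (foldl (step r) [] A ! i) # C)"
    (is "valid_strategy E r ?S")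
    and idle: "agent_idle i B" and weights_pos: "\<forall>e\<in>E. w e > 0"
  shows "valid_strategy E r (A @ B @ C)"
    and "strategy_cost q w r (A @ B @ C) < strategy_cost q w r ?S"
    and "run_visited r [] ?S \<subseteq> insert v (run_visited r [] (A @ B @ C))"
proof -
  define P where "P = foldl (step r) [] A"
  have valid_A: "run_valid E r [] A"
    and valid_trip: "run_valid E r P (Traverse i v # B @ Traverse i (P ! i) # C)"
    using valid by (simp_all add: valid_strategy_iff_run_valid run_valid_append P_def)
  then have "w {P ! i, v} > 0"
    using weights_pos by (simp add: move_ok_def)
  moreover note trip = round_trip_removal[OF valid_trip idle]
  moreover have "num_agents (A @ B @ C) = num_agents ?S"
    by (simp add: num_agents_def)
  ultimately show "valid_strategy E r (A @ B @ C)"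
    and "strategy_cost q w r (A @ B @ C) < strategy_cost q w r ?S"
    and "run_visited r [] ?S \<subseteq> insert v (run_visited r [] (A @ B @ C))"
    using valid_A
    by (auto simp: valid_strategy_iff_run_valid strategy_cost_eq_run_cost run_valid_append
        run_cost_append run_visited_append P_def[symmetric] simp del: append.simps)
qed

lemma split_at_two_indices:
  assumes "j < j'" "j' < length xs"
  shows "xs = take j xs @ xs ! j # take (j' - Suc j) (drop (Suc j) xs) @ xs ! j' # drop (Suc j') xs"
proof -
  have "take j' xs = take j xs @ xs ! j # take (j' - Suc j) (drop (Suc j) xs)"
    using assms id_take_nth_drop[of j "take j' xs"] by (simp add: min_def drop_take)
  then show ?thesis
    using assms id_take_nth_drop[of j' xs] by simp
qed

lemma agent_idle_between:
  assumes "\<forall>l. j < l \<and> l < j' \<longrightarrow> (\<forall>u. xs ! l \<noteq> Traverse i u)" "j' \<le> length xs"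
  shows "agent_idle i (take (j' - Suc j) (drop (Suc j) xs))"
  unfolding agent_idle_def
proof (intro ballI allI)
  fix m u
  assume "m \<in> set (take (j' - Suc j) (drop (Suc j) xs))"
  then obtain t where "t < j' - Suc j" "m = xs ! (Suc j + t)"
    using assms(2) by (auto simp: in_set_conv_nth)
  then show "m \<noteq> Traverse i u"
    using assms(1) by simp
qed

lemma internal_vertex_has_child:
  assumes "internal_vertex V E r v"
  obtains c where "is_child E r v c"
proof -
  have "card {c. is_child E r v c} = 1"
    using assms by (simp add: internal_vertex_def)
  then obtain c where "{c. is_child E r v c} = {c}"
    by (rule card_1_singletonE)
  then show thesis
    using that by blast
qed

lemma is_child_in_vertices:
  assumes "simple_graph V E" "is_child E r v c"
  shows "c \<in> V" "c \<noteq> v"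
proof -
  obtain ps where "{v, c} \<in> E" "distinct (ps @ [v, c])"
    using assms(2) by (auto simp: is_child_def is_path_def)
  then show "c \<noteq> v"
    by auto
  from \<open>{v, c} \<in> E\<close> obtain x y where "x \<in> V" "y \<in> V" "{v, c} = {x, y}"
    using assms(1) by (auto simp: simple_graph_def)
  then show "c \<in> V"
    by (auto simp: doubleton_eq_iff)
qed

lemma tree_explores_if_visits_all_but_parent:
  assumes tree: "is_tree V E" and child: "is_child E r v c"
    and valid: "valid_strategy E r S" and visited: "V \<subseteq> insert v (run_visited r [] S)"
  shows "explores V r S"
proof -
  have "c \<in> run_visited r [] S"
    using is_child_in_vertices[OF _ child] tree visited by (auto simp: is_tree_def)
  then obtain xs where "is_walk E xs" "hd xs = r" "last xs = c" "set xs \<subseteq> run_visited r [] S"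
    using run_visited_reachable[of E r "[]" S c] valid by (auto simp: valid_strategy_iff_run_valid)
  then have "v \<in> run_visited r [] S"
    using walk_to_child_contains_parent[OF _ child] tree by (auto simp: is_tree_def)
  then show ?thesis
    using visited by (auto simp: explores_iff_run_visited)
qed

theorem mainTheorem6:
  fixes V :: "'a set" and E :: "'a set set" and w :: "'a set \<Rightarrow> real"
    and r v :: 'a and q :: real and S :: "'a move list"
  assumes "is_tree V E"
    and "r \<in> V"
    and "\<forall>e\<in>E. w e > 0"
    and "q \<ge> 0"
    and "internal_vertex V E r v"
    and "cost_optimal V E w r q S"
  shows "\<forall>j j' i x. j < j' \<and> j' < length S \<and> S ! j = Traverse i v \<and> S ! j' = Traverse i x
           \<and> (\<forall>l. j < l \<and> l < j' \<longrightarrow> (\<forall>y. S ! l \<noteq> Traverse i y))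
           \<longrightarrow> x \<noteq> pos_after r S j ! i"
proof (intro allI impI notI)
  fix j j' i x
  assume moves: "j < j' \<and> j' < length S \<and> S ! j = Traverse i v \<and> S ! j' = Traverse i x
           \<and> (\<forall>l. j < l \<and> l < j' \<longrightarrow> (\<forall>y. S ! l \<noteq> Traverse i y))"
    and return: "x = pos_after r S j ! i"
  define A B C where "A = take j S" and "B = take (j' - Suc j) (drop (Suc j) S)"
    and "C = drop (Suc j') S"
  have S: "S = A @ Traverse i v # B @ Traverse i (foldl (step r) [] A ! i) # C"
    using split_at_two_indices[of j j' S] moves return by (simp add: A_def B_def C_def pos_after_def)
  have idle: "agent_idle i B"
    using agent_idle_between[of j j' S i] moves by (simp add: B_def)
  have optimal: "valid_strategy E r S" "explores V r S"
    "\<And>S'. valid_strategy E r S' \<Longrightarrow> explores V r S' \<Longrightarrow> strategy_cost q w r S \<le> strategy_cost q w r S'"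
    using assms(6) by (auto simp: cost_optimal_def)
  note shorter = strategy_round_trip_removal[OF optimal(1)[unfolded S] idle assms(3), folded S]
  obtain c where "is_child E r v c"
    using assms(5) by (rule internal_vertex_has_child)
  then have "explores V r (A @ B @ C)"
    using tree_explores_if_visits_all_but_parent assms(1) shorter(1,3) optimal(2)
    by (fastforce simp: explores_iff_run_visited)
  then show False
    using optimal(3) shorter(1) shorter(2)[of q] by fastforce
qed

end
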